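(* Let $F$ be a finite field with $q=|F|$ and let $u,v\in\mathbb{N}$. For each $y=(y_1,\ldots,y_{u+v-1})\in F^{u+v-1}$ define the $v\times v$ matrix $J_{u,v}(y)=(y_{u-i+j})_{1\le i\le v,\,1\le j\le v}$, where $y_0:=1$ and $y_k:=0$ for all $k<0$. Then the number of $y\in F^{u+v-1}$ satisfying $\det(J_{u,v}(y))=0$ is $q^{u+v-2}$.
   Context: $\mathbb{N}=\{0,1,2,\ldots\}$. *)

theory Defs
  imports "Jordan_Normal_Form.Determinant"
begin

text \<open>The vector y = (y_1,...,y_{u+v-1}) is represented as a list ys of length u+v-1,
  with y_k = ys ! (k-1) for 1 <= k <= u+v-1, y_0 = 1 and y_k = 0 for k < 0.\<close>

definition yent :: "'a::comm_ring_1 list \<Rightarrow> int \<Rightarrow> 'a" where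
  "yent ys k = (if k = 0 then 1 else if k < 0 then 0 else ys ! (nat k - 1))"

text \<open>J_{u,v}(y) = (y_{u-i+j}) with 1-based i,j; with 0-based indices the difference
  j - i is the same.\<close>

definition Jmat :: "nat \<Rightarrow> nat \<Rightarrow> 'a::comm_ring_1 list \<Rightarrow> 'a mat" where
  "Jmat u v ys = mat v v (\<lambda>(i, j). yent ys (int u - int i + int j))"

end

theory Submission
  imports Defs "HOL-Computational_Algebra.Formal_Power_Series"
begin

text \<open>Put \<open>f = 1 + y\<^sub>1 X + y\<^sub>2 X\<^sup>2 + \<dots>\<close>. Then \<open>det J(y) = 0\<close> says that some
  nonzero \<open>Q\<close> of degree \<open>< v\<close> kills the coefficients \<open>u, \<dots>, u + v - 1\<close> of \<open>f Q\<close>. Call this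
  condition on a power series \<open>f\<close> and a window \<open>(a, b)\<close> Toeplitz singularity. It is unchanged
  by scaling \<open>f\<close>; it passes from \<open>(a, b)\<close> to \<open>(b, a)\<close> on replacing \<open>f\<close> by \<open>f\<^sup>-\<^sup>1\<close>; and when the
  constant term does not matter (it is \<open>0\<close>, or \<open>b \<le> a\<close>) it passes to \<open>(a - 1, b)\<close> on removing
  that term and dividing by \<open>X\<close>. Sorting the coefficient lists of length \<open>a + b\<close> by their first
  entry, these three facts give by induction on \<open>a + b\<close> that exactly \<open>q\<^sup>a\<^sup>+\<^sup>b\<^sup>-\<^sup>1\<close> of them are
  Toeplitz singular, and that \<open>q\<^sup>a\<^sup>+\<^sup>b\<^sup>-\<^sup>2\<close> of those starting with \<open>1\<close> are.\<close>

no_notation vec_index (infixl \<open>$\<close> 100)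
notation fps_nth (infixl \<open>$\<close> 75)

definition fps_of_list :: "'a::zero list \<Rightarrow> 'a fps" where
  "fps_of_list xs = Abs_fps (\<lambda>k. if k < length xs then xs ! k else 0)"

lemma fps_of_list_nth: "fps_of_list xs $ k = (if k < length xs then xs ! k else 0)"
  by (simp add: fps_of_list_def)

lemma fps_of_list_Cons:
  "fps_of_list (x # xs) = fps_const (x::'a::comm_ring_1) + fps_X * fps_of_list xs"
  by (rule fps_ext) (auto simp: fps_of_list_nth nth_Cons split: nat.splits)

lemma fps_of_list_map_mult:
  "fps_of_list (map ((*) c) xs) = fps_const (c::'a::ring_1) * fps_of_list xs"
  by (rule fps_ext) (simp add: fps_of_list_nth)

lemma fps_of_list_inject:
  assumes "fps_of_list xs = fps_of_list ys" "length xs = length ys"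
  shows "xs = ys"
proof (rule nth_equalityI)
  show "xs ! k = ys ! k" if "k < length xs" for k
    using arg_cong[OF assms(1), of "\<lambda>f. f $ k"] assms(2) that by (simp add: fps_of_list_nth)
qed (fact assms(2))

text \<open>A nonzero \<open>Q\<close> of degree \<open>< b\<close> is, up to reversing its coefficients, a kernel vector of
  the \<open>b \<times> b\<close> Toeplitz matrix \<open>(f $ (a - i + j))\<^sub>i\<^sub>j\<close>, where \<open>f $ k = 0\<close> for \<open>k < 0\<close>.\<close>

definition toeplitz_singular :: "nat \<Rightarrow> nat \<Rightarrow> 'a::field fps \<Rightarrow> bool" where
  "toeplitz_singular a b f \<longleftrightarrow>
     (\<exists>Q. Q \<noteq> 0 \<and> (\<forall>k\<ge>b. Q $ k = 0) \<and> (\<forall>k\<in>{a..<a+b}. (f * Q) $ k = 0))"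

lemma toeplitz_singular_fps_cutoff:
  "toeplitz_singular a b (fps_cutoff (a + b) f) \<longleftrightarrow> toeplitz_singular a b f"
  by (simp add: toeplitz_singular_def fps_cutoff_left_mult_nth)

lemma toeplitz_singular_zero_size: "\<not> toeplitz_singular a 0 f"
  by (auto simp: toeplitz_singular_def fps_eq_iff)

lemma toeplitz_singular_const_mult:
  "c \<noteq> 0 \<Longrightarrow> toeplitz_singular a b (fps_const c * f) \<longleftrightarrow> toeplitz_singular a b f"
  by (simp add: toeplitz_singular_def mult.assoc)

text \<open>The constant term only meets the coefficients of \<open>Q\<close> of index \<open>\<ge> a \<ge> b\<close>, which vanish.\<close>

lemma toeplitz_singular_shift:
  assumes "1 \<le> a" "b \<le> a \<or> c = 0"
  shows "toeplitz_singular a b (fps_const c + fps_X * g) \<longleftrightarrow> toeplitz_singular (a - 1) b g"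
proof -
  have coeff: "((fps_const c + fps_X * g) * Q) $ Suc k = (g * Q) $ k"
    if "\<forall>k\<ge>b. Q $ k = 0" "a \<le> Suc k" for Q k
    using that assms by (auto simp: distrib_right mult.assoc)
  have "{a..<a+b} = Suc ` {a-1..<a-1+b}"
    using assms(1) by simp
  then have window: "(\<forall>k\<in>{a..<a+b}. R k) \<longleftrightarrow> (\<forall>k\<in>{a-1..<a-1+b}. R (Suc k))" for R
    by (simp only: ball_simps)
  have "(\<forall>k\<in>{a..<a+b}. ((fps_const c + fps_X * g) * Q) $ k = 0) \<longleftrightarrow>
      (\<forall>k\<in>{a-1..<a-1+b}. (g * Q) $ k = 0)" if "\<forall>k\<ge>b. Q $ k = 0" for Q
    unfolding window using assms(1) by (intro ball_cong) (auto simp: coeff[OF that])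
  then show ?thesis
    unfolding toeplitz_singular_def by blast
qed

text \<open>With \<open>P\<close> the part of \<open>f Q\<close> below \<open>X\<^sup>a\<close>, \<open>f Q \<equiv> P\<close> and hence \<open>Q \<equiv> f\<^sup>-\<^sup>1 P\<close> modulo \<open>X\<^sup>a\<^sup>+\<^sup>b\<close>.\<close>

lemma toeplitz_singular_inverseI:
  assumes "f $ 0 \<noteq> 0" "toeplitz_singular a b f"
  shows "toeplitz_singular b a (inverse f)"
proof -
  obtain Q where Q: "Q \<noteq> 0" "\<forall>k\<ge>b. Q $ k = 0" "\<forall>k\<in>{a..<a+b}. (f * Q) $ k = 0"
    using assms(2) unfolding toeplitz_singular_def by blast
  define P where "P = fps_cutoff a (f * Q)"
  have "inverse f * (f * Q) = Q"
    using assms(1) by (simp add: mult.assoc[symmetric] inverse_mult_eq_1)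
  moreover have "fps_cutoff (a + b) P = fps_cutoff (a + b) (f * Q)"
    using Q(3) by (auto simp: P_def fps_eq_iff)
  ultimately have P_Q: "(inverse f * P) $ k = Q $ k" if "k < a + b" for k
    by (metis fps_cutoff_right_mult_nth that)
  have "P \<noteq> 0"
  proof
    assume "P = 0"
    then have "Q $ k = 0" for k
      using P_Q[of k] Q(2) by (cases "k < a + b") auto
    with Q(1) show False by (simp add: fps_eq_iff)
  qed
  moreover have "\<forall>k\<ge>a. P $ k = 0" by (simp add: P_def)
  moreover have "\<forall>k\<in>{b..<b+a}. (inverse f * P) $ k = 0"
    using P_Q Q(2) by auto
  ultimately show ?thesis unfolding toeplitz_singular_def by blast
qed

lemma toeplitz_singular_inverse:
  "f $ 0 \<noteq> 0 \<Longrightarrow> toeplitz_singular b a (inverse f) \<longleftrightarrow> toeplitz_singular a b f"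
  using toeplitz_singular_inverseI[of f a b] toeplitz_singular_inverseI[of "inverse f" b a]
  by auto

lemma toeplitz_singular_zero_iff:
  assumes "1 \<le> b"
  shows "toeplitz_singular 0 b f \<longleftrightarrow> f $ 0 = 0"
proof
  assume "toeplitz_singular 0 b f"
  then show "f $ 0 = 0"
    using toeplitz_singular_inverse[where a=0 and b=b] toeplitz_singular_zero_size by blast
next
  assume "f $ 0 = 0"
  then have "\<forall>k\<in>{0..<0+b}. (f * fps_X ^ (b - 1)) $ k = 0"
    by (simp add: mult.commute[of f] fps_X_power_mult_nth)
  moreover have "\<forall>k\<ge>b. (fps_X ^ (b - 1) :: 'a fps) $ k = 0"
    using assms by (auto simp: fps_X_power_iff)
  ultimately show "toeplitz_singular 0 b f"
    unfolding toeplitz_singular_def by (intro exI[of _ "fps_X ^ (b - 1)"]) simp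
qed

definition singular_lists :: "nat \<Rightarrow> nat \<Rightarrow> 'a::field list set" where
  "singular_lists a b = {ys. length ys = a + b \<and> toeplitz_singular a b (fps_of_list ys)}"

definition singular_tails :: "'a::field \<Rightarrow> nat \<Rightarrow> nat \<Rightarrow> 'a list set" where
  "singular_tails x a b =
     {ys. length ys = a + b - 1 \<and> toeplitz_singular a b (fps_of_list (x # ys))}"

lemma singular_tails_shift:
  assumes "1 \<le> a" "b \<le> a \<or> x = 0"
  shows "singular_tails x a b = singular_lists (a - 1) b"
  using assms toeplitz_singular_shift[OF assms]
  by (auto simp: singular_tails_def singular_lists_def fps_of_list_Cons)

lemma singular_tails_zero_left:
  assumes "1 \<le> b"
  shows "singular_tails x 0 b = (if x = 0 then {ys. length ys = b - 1} else {})"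
proof -
  have "toeplitz_singular 0 b (fps_of_list (x # ys)) \<longleftrightarrow> x = 0" for ys
    by (simp add: toeplitz_singular_zero_iff[OF assms] fps_of_list_nth)
  then show ?thesis by (auto simp: singular_tails_def)
qed

lemma card_singular_tails_scale:
  fixes x :: "'a::field"
  assumes "x \<noteq> 0"
  shows "card (singular_tails x a b) = card (singular_tails (1::'a) a b)"
proof -
  have fps: "fps_of_list (c # map ((*) c) ys) = fps_const c * fps_of_list (1 # ys)" for c :: 'a
    and ys
    using fps_of_list_map_mult[of c "1 # ys"] by simp
  have "bij_betw (map ((*) x)) (singular_tails 1 a b) (singular_tails x a b)"
  proof (rule bij_betw_byWitness[where f' = "map ((*) (inverse x))"])
    show "map ((*) x) ` singular_tails 1 a b \<subseteq> singular_tails x a b"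
      using assms by (auto simp: singular_tails_def fps toeplitz_singular_const_mult)
    show "map ((*) (inverse x)) ` singular_tails x a b \<subseteq> singular_tails 1 a b"
    proof
      fix ys assume "ys \<in> map ((*) (inverse x)) ` singular_tails x a b"
      then obtain zs where zs: "zs \<in> singular_tails x a b" "ys = map ((*) (inverse x)) zs"
        by blast
      then have "zs = map ((*) x) ys"
        using assms by (simp add: map_idI)
      with zs(1) show "ys \<in> singular_tails 1 a b"
        using assms by (simp add: singular_tails_def fps toeplitz_singular_const_mult)
    qed
  qed (use assms in \<open>auto simp: map_idI\<close>)
  then show ?thesis by (metis bij_betw_same_card)
qed

definition inverse_tail :: "'a::field list \<Rightarrow> 'a list" where
  "inverse_tail ys = map (\<lambda>k. inverse (fps_of_list (1 # ys)) $ Suc k) [0..<length ys]"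

lemma length_inverse_tail [simp]: "length (inverse_tail ys) = length ys"
  by (simp add: inverse_tail_def)

lemma fps_of_list_inverse_tail:
  "fps_of_list (1 # inverse_tail ys) = fps_cutoff (Suc (length ys)) (inverse (fps_of_list (1 # ys)))"
  by (rule fps_ext) (auto simp: fps_of_list_nth inverse_tail_def nth_Cons split: nat.splits)

lemma inverse_tail_inverse_tail: "inverse_tail (inverse_tail ys) = ys"
proof -
  let ?n = "Suc (length ys)"
  have unit: "fps_of_list (1 # ys) $ 0 \<noteq> 0" by (simp add: fps_of_list_nth)
  have "fps_of_list (1 # inverse_tail (inverse_tail ys))
      = fps_cutoff ?n (inverse (fps_cutoff ?n (inverse (fps_of_list (1 # ys)))))"
    by (simp add: fps_of_list_inverse_tail)
  also have "\<dots> = fps_cutoff ?n (fps_of_list (1 # ys))"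
    using unit by (simp add: fps_cutoff_inverse)
  also have "\<dots> = fps_of_list (1 # ys)"
    by (rule fps_ext) (simp add: fps_of_list_nth)
  finally show ?thesis
    by (auto dest: fps_of_list_inject)
qed

lemma inverse_tail_singular_tails:
  assumes "ys \<in> singular_tails 1 a b"
  shows "inverse_tail ys \<in> singular_tails 1 b a"
proof -
  have len: "length ys = a + b - 1" and sing: "toeplitz_singular a b (fps_of_list (1 # ys))"
    using assms by (simp_all add: singular_tails_def)
  have "a + b \<noteq> 0" using sing toeplitz_singular_zero_size by fastforce
  then have "fps_cutoff (b + a) (fps_of_list (1 # inverse_tail ys))
      = fps_cutoff (b + a) (inverse (fps_of_list (1 # ys)))"
    using len by (simp add: fps_of_list_inverse_tail fps_eq_iff)
  then have "toeplitz_singular b a (fps_of_list (1 # inverse_tail ys))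
      \<longleftrightarrow> toeplitz_singular b a (inverse (fps_of_list (1 # ys)))"
    by (metis toeplitz_singular_fps_cutoff)
  moreover have "toeplitz_singular b a (inverse (fps_of_list (1 # ys)))"
    using sing by (simp add: toeplitz_singular_inverse fps_of_list_nth)
  ultimately show ?thesis
    using len by (simp add: singular_tails_def)
qed

lemma card_singular_tails_one_swap:
  "card (singular_tails (1::'a::field) a b) = card (singular_tails (1::'a) b a)"
proof -
  have "bij_betw inverse_tail (singular_tails 1 a b) (singular_tails (1::'a) b a)"
    by (rule bij_betw_byWitness[where f' = inverse_tail])
      (simp_all add: inverse_tail_inverse_tail image_subset_iff inverse_tail_singular_tails)
  then show ?thesis by (rule bij_betw_same_card)
qed

lemma card_singular_tails_one:
  assumes "1 \<le> a" "1 \<le> b"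
  shows "card (singular_tails (1::'a::field) a b)
    = card (singular_lists (max a b - 1) (min a b) :: 'a list set)"
proof (cases "b \<le> a")
  case True
  then show ?thesis
    using singular_tails_shift[of a b "1::'a"] assms by (simp add: max_absorb1 min_absorb2)
next
  case False
  then show ?thesis
    using card_singular_tails_one_swap[of a b, where 'a='a] singular_tails_shift[of b a "1::'a"] assms
    by simp
qed

lemma singular_lists_eq_UN_Cons:
  assumes "1 \<le> a + b"
  shows "singular_lists a b = (\<Union>x::'a::field. Cons x ` singular_tails x a b)"
proof -
  have "ys \<in> singular_lists a b \<longleftrightarrow> (\<exists>x zs. ys = x # zs \<and> zs \<in> singular_tails x a b)"
    for ys :: "'a::field list"
    using assms by (cases ys) (auto simp: singular_lists_def singular_tails_def)
  then show ?thesis by blast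
qed

lemma card_singular_lists_decompose:
  fixes a b :: nat
  defines "q \<equiv> card (UNIV :: 'a::{field,finite} set)"
  assumes "1 \<le> a + b"
  shows "card (singular_lists a b :: 'a list set)
    = card (singular_tails (0::'a) a b) + (q - 1) * card (singular_tails (1::'a) a b)"
proof -
  let ?T = "\<lambda>x::'a. singular_tails x a b"
  have "finite {ys :: 'a list. length ys = a + b - 1}"
    using finite_lists_length_eq[of "UNIV :: 'a set"] by simp
  then have finite_tails: "finite (?T x)" for x
    by (rule rev_finite_subset) (auto simp: singular_tails_def)
  have "card (singular_lists a b :: 'a list set) = (\<Sum>x\<in>UNIV. card (Cons x ` ?T x))"
    unfolding singular_lists_eq_UN_Cons[OF assms(2)]
    by (rule card_UN_disjoint) (auto simp: finite_tails)
  also have "\<dots> = (\<Sum>x\<in>UNIV. card (?T x))"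
    by (simp add: card_image)
  also have "\<dots> = card (?T 0) + (\<Sum>x\<in>UNIV - {0}. card (?T x))"
    by (simp add: sum.remove)
  also have "(\<Sum>x\<in>UNIV - {0}. card (?T x)) = (\<Sum>x\<in>UNIV - {0::'a}. card (?T 1))"
    by (rule sum.cong) (auto intro: card_singular_tails_scale)
  also have "\<dots> = (q - 1) * card (?T 1)"
    by (simp add: q_def card_Diff_singleton)
  finally show ?thesis .
qed

lemma card_singular_lists:
  assumes "1 \<le> b"
  shows "card (singular_lists a b :: 'a::{field,finite} list set)
    = card (UNIV :: 'a set) ^ (a + b - 1)"
  using assms
proof (induction "a + b" arbitrary: a b rule: less_induct)
  case less
  let ?q = "card (UNIV :: 'a set)"
  show ?case
  proof (cases "a = 0")
    case True
    have "card {ys :: 'a list. length ys = b - 1} = ?q ^ (b - 1)"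
      using card_lists_length_eq[of "UNIV :: 'a set"] by simp
    then show ?thesis
      using True less.prems card_singular_lists_decompose[of 0 b, where 'a='a, simplified]
      by (simp add: singular_tails_zero_left)
  next
    case False
    have IH: "card (singular_lists a' b' :: 'a list set) = ?q ^ (a + b - 2)"
      if "a' + b' = a + b - 1" "1 \<le> b'" for a' b'
      using less.hyps[of a' b'] that False by (simp add: numeral_2_eq_2)
    have "card (singular_tails (0::'a) a b) = ?q ^ (a + b - 2)"
      using singular_tails_shift[of a b "0::'a"] IH[of "a - 1" b] False less.prems by simp
    moreover have "card (singular_tails (1::'a) a b) = ?q ^ (a + b - 2)"
      using card_singular_tails_one[of a b, where 'a='a] IH[of "max a b - 1" "min a b"]
        False less.prems by simp
    ultimately have "card (singular_lists a b :: 'a list set)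
        = ?q ^ (a + b - 2) + (?q - 1) * ?q ^ (a + b - 2)"
      using card_singular_lists_decompose[of a b, where 'a='a] False by simp
    also have "\<dots> = ?q ^ Suc (a + b - 2)"
      using finite_UNIV_card_ge_0[where 'a='a] by (cases ?q) simp_all
    also have "Suc (a + b - 2) = a + b - 1"
      using False less.prems by simp
    finally show ?thesis .
  qed
qed

lemma fps_mult_nth_degree_less:
  fixes f g :: "'a::comm_semiring_0 fps"
  assumes "\<forall>k\<ge>v. g $ k = 0"
  shows "(f * g) $ n = (\<Sum>k<v. (if k \<le> n then f $ (n - k) else 0) * g $ k)"
proof -
  have "(f * g) $ n = (g * f) $ n"
    by (simp add: mult.commute)
  also have "\<dots> = (\<Sum>k\<in>{..n}. g $ k * f $ (n - k))"
    by (simp add: fps_mult_nth atLeast0AtMost)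
  also have "\<dots> = (\<Sum>k\<in>{..<v} \<inter> {..n}. g $ k * f $ (n - k))"
  proof (rule sum.mono_neutral_right)
    show "\<forall>k\<in>{..n} - {..<v} \<inter> {..n}. g $ k * f $ (n - k) = 0"
      using assms by (metis DiffE IntI lessThan_iff mult_zero_left not_le)
  qed auto
  also have "\<dots> = (\<Sum>k<v. (if k \<le> n then f $ (n - k) else 0) * g $ k)"
    by (auto simp: sum.inter_restrict mult.commute intro!: sum.cong)
  finally show ?thesis .
qed

definition fps_of_vec_rev :: "'a::zero vec \<Rightarrow> 'a fps" where
  "fps_of_vec_rev c = Abs_fps (\<lambda>k. if k < dim_vec c then vec_index c (dim_vec c - 1 - k) else 0)"

lemma fps_of_vec_rev_nth:
  "fps_of_vec_rev c $ k = (if k < dim_vec c then vec_index c (dim_vec c - 1 - k) else 0)"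
  by (simp add: fps_of_vec_rev_def)

lemma fps_of_vec_rev_eq_0_iff: "fps_of_vec_rev c = 0 \<longleftrightarrow> c = 0\<^sub>v (dim_vec c)"
proof
  assume zero: "fps_of_vec_rev c = 0"
  have "vec_index c j = 0" if "j < dim_vec c" for j
  proof -
    have "fps_of_vec_rev c $ (dim_vec c - 1 - j) = 0" using zero by simp
    then show ?thesis using that by (simp add: fps_of_vec_rev_nth)
  qed
  then show "c = 0\<^sub>v (dim_vec c)" by (intro eq_vecI) simp_all
next
  have "fps_of_vec_rev (0\<^sub>v n) = (0 :: 'a fps)" for n
    by (simp add: fps_eq_iff fps_of_vec_rev_nth)
  then show "c = 0\<^sub>v (dim_vec c) \<Longrightarrow> fps_of_vec_rev c = 0" by metis
qed

lemma fps_of_vec_rev_vec: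
  assumes "\<forall>k\<ge>v. Q $ k = 0"
  shows "fps_of_vec_rev (vec v (\<lambda>j. Q $ (v - 1 - j))) = Q"
  using assms by (intro fps_ext) (auto simp: fps_of_vec_rev_nth)

lemma yent_eq_fps_of_list_nth:
  assumes "length ys = u + v - 1" "i < v" "j < v"
  shows "yent ys (int u - int i + int j)
    = (if v - Suc j \<le> u + v - 1 - i
       then fps_of_list (1 # ys) $ (u + v - 1 - i - (v - Suc j)) else 0)"
proof (cases "i \<le> u + j")
  case True
  then have "nat (int u - int i + int j) = u + j - i" "u + v - 1 - i - (v - Suc j) = u + j - i"
    using assms(3) by auto
  then show ?thesis
    using True assms by (auto simp: yent_def fps_of_list_nth nth_Cons')
qed (use assms in \<open>auto simp: yent_def\<close>)

lemma Jmat_mult_vec_nth: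
  assumes "length ys = u + v - 1" "i < v" "c \<in> carrier_vec v"
  shows "vec_index (Jmat u v ys *\<^sub>v c) i
    = (fps_of_list (1 # ys) * fps_of_vec_rev c) $ (u + v - 1 - i)"
proof -
  let ?f = "fps_of_list (1 # ys)" and ?n = "u + v - 1 - i"
  have "vec_index (Jmat u v ys *\<^sub>v c) i
      = (\<Sum>j<v. yent ys (int u - int i + int j) * vec_index c j)"
    using assms(2,3) by (simp add: Jmat_def scalar_prod_def atLeast0LessThan)
  also have "\<dots> = (\<Sum>j<v. (if v - Suc j \<le> ?n then ?f $ (?n - (v - Suc j)) else 0)
                           * fps_of_vec_rev c $ (v - Suc j))"
    using assms by (intro sum.cong refl) (auto simp: yent_eq_fps_of_list_nth fps_of_vec_rev_nth)
  also have "\<dots> = (\<Sum>k<v. (if k \<le> ?n then ?f $ (?n - k) else 0) * fps_of_vec_rev c $ k)"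
    by (rule sum.nat_diff_reindex)
  also have "\<dots> = (?f * fps_of_vec_rev c) $ ?n"
    using assms(3) by (intro fps_mult_nth_degree_less[symmetric]) (simp add: fps_of_vec_rev_nth)
  finally show ?thesis .
qed

lemma det_Jmat_eq_0_iff:
  fixes ys :: "'a::field list"
  assumes "length ys = u + v - 1"
  shows "det (Jmat u v ys) = 0 \<longleftrightarrow> toeplitz_singular u v (fps_of_list (1 # ys))"
proof -
  let ?f = "fps_of_list (1 # ys)"
  have flip: "(\<forall>i<v. P (u + v - 1 - i)) \<longleftrightarrow> (\<forall>k\<in>{u..<u+v}. P k)" for P
  proof (intro iffI allI ballI impI)
    show "P k" if "\<forall>i<v. P (u + v - 1 - i)" "k \<in> {u..<u+v}" for k
    proof -
      have "u + v - 1 - k < v" "u + v - 1 - (u + v - 1 - k) = k"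
        using that(2) by auto
      then show ?thesis using that(1) by metis
    qed
  qed simp
  have kernel: "Jmat u v ys *\<^sub>v c = 0\<^sub>v v
      \<longleftrightarrow> (\<forall>k\<in>{u..<u+v}. (?f * fps_of_vec_rev c) $ k = 0)"
    if "c \<in> carrier_vec v" for c
  proof -
    have "dim_row (Jmat u v ys) = v" by (simp add: Jmat_def)
    then show ?thesis
      using that unfolding flip[symmetric]
      by (auto simp: vec_eq_iff Jmat_mult_vec_nth[OF assms] simp del: index_mult_mat_vec)
  qed
  have "det (Jmat u v ys) = 0 \<longleftrightarrow>
      (\<exists>c \<in> carrier_vec v. c \<noteq> 0\<^sub>v v \<and> (\<forall>k\<in>{u..<u+v}. (?f * fps_of_vec_rev c) $ k = 0))"
    using kernel by (subst det_0_iff_vec_prod_zero_field) (auto simp: Jmat_def)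
  also have "\<dots> \<longleftrightarrow> toeplitz_singular u v ?f"
  proof
    assume "\<exists>c \<in> carrier_vec v. c \<noteq> 0\<^sub>v v \<and> (\<forall>k\<in>{u..<u+v}. (?f * fps_of_vec_rev c) $ k = 0)"
    then obtain c where "c \<in> carrier_vec v" "c \<noteq> 0\<^sub>v v"
      and "\<forall>k\<in>{u..<u+v}. (?f * fps_of_vec_rev c) $ k = 0"
      by blast
    then show "toeplitz_singular u v ?f"
      unfolding toeplitz_singular_def
      by (intro exI[of _ "fps_of_vec_rev c"]) (auto simp: fps_of_vec_rev_eq_0_iff fps_of_vec_rev_nth)
  next
    assume "toeplitz_singular u v ?f"
    then obtain Q where "Q \<noteq> 0" "\<forall>k\<ge>v. Q $ k = 0" "\<forall>k\<in>{u..<u+v}. (?f * Q) $ k = 0"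
      unfolding toeplitz_singular_def by blast
    then show "\<exists>c \<in> carrier_vec v. c \<noteq> 0\<^sub>v v \<and> (\<forall>k\<in>{u..<u+v}. (?f * fps_of_vec_rev c) $ k = 0)"
      using fps_of_vec_rev_vec[of v Q] fps_of_vec_rev_eq_0_iff[of "vec v (\<lambda>j. Q $ (v - 1 - j))"]
      by (intro bexI[of _ "vec v (\<lambda>j. Q $ (v - 1 - j))"]) auto
  qed
  finally show ?thesis .
qed

theorem corollary5:
  assumes "u \<ge> 1" and "v \<ge> 1"
  shows "card {ys :: ('a::{field,finite}) list. length ys = u + v - 1 \<and> det (Jmat u v ys) = 0}
           = card (UNIV :: 'a set) ^ (u + v - 2)"
proof -
  have "{ys :: 'a list. length ys = u + v - 1 \<and> det (Jmat u v ys) = 0} = singular_tails 1 u v"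
    by (auto simp: singular_tails_def det_Jmat_eq_0_iff)
  then have "card {ys :: 'a list. length ys = u + v - 1 \<and> det (Jmat u v ys) = 0}
      = card (singular_lists (max u v - 1) (min u v) :: 'a list set)"
    using card_singular_tails_one[OF assms] by simp
  also have "\<dots> = card (UNIV :: 'a set) ^ (u + v - 2)"
    using card_singular_lists[of "min u v" "max u v - 1", where 'a='a] assms
    by (auto simp: max_def min_def numeral_2_eq_2 add.commute)
  finally show ?thesis .
qed

end
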